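(* Let $P$ be the transition matrix of a reversible and ergodic Markov chain on $V$ with stationary distribution $\pi$ and mixing rate $t^*$. For the SRT router model for $P$, with any initial configuration, $$\left|\chi^{(T)}_w-\mu^{(T)}_w\right|\le\frac{6\pi_w}{\pi_{\min}}\,t^*\,\Delta$$ for all $w\in V$ and all $T\ge0$.
   Context: Let $V=\{1,\dots,N\}$ and let $P\in\mathbb{R}_{\ge 0}^{N\times N}$ be an ergodic (irreducible, aperiodic) stochastic matrix (entries may be irrational) with stationary distribution $\pi$; $\pi_{\min}=\min_v\pi_v$; reversible means $\pi_uP_{u,v}=\pi_vP_{v,u}$ for all $u,v$. For $v\in V$ let $\mathcal N(v)=\{u: P_{v,u}>0\}$, $\delta(v)=|\mathcal N(v)|$, $\Delta=\max_v\delta(v)$. Total variation distance $d_{TV}(\xi,\zeta)=\frac12\|\xi-\zeta\|_1$; mixing time $\tau(\varepsilon)=\max_{v}\min\{t\ge0: d_{TV}(P^t_{v,\cdot},\pi)\le\varepsilon\}$; mixing rate $t^*=\tau(1/4)$. A functional-router model consists of functions $\sigma_v:\mathbb{Z}_{\ge0}\to\mathcal N(v)$; write $I_{v,u}[z,z')=|\{j\in\{z,\dots,z'-1\}:\sigma_v(j)=u\}|$ (zero if $z'\le z$). Given $\chi^{(0)}\in\mathbb{Z}_{\ge0}^N$, set $Z^{(t)}_{v,u}=I_{v,u}\big[\sum_{s=0}^{t-1}\chi^{(s)}_v,\sum_{s=0}^{t}\chi^{(s)}_v\big)$, $\chi^{(t+1)}_u=\sum_vZ^{(t)}_{v,u}$,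 $\mu^{(0)}=\chi^{(0)}$, $\mu^{(t)}=\mu^{(0)}P^t$. The SRT router is defined recursively: for $i\ge0$ let $T_i(v)=\{u\in\mathcal N(v): I_{v,u}[0,i)-(i+1)P_{v,u}<0\}$ and let $\sigma_v(i)$ be an element $u\in T_i(v)$ minimizing $(I_{v,u}[0,i)+1)/P_{v,u}$ (ties broken arbitrarily). *)

theory Defs
  imports Complex_Main
begin

primrec matpow :: "('v::finite \<Rightarrow> 'v \<Rightarrow> real) \<Rightarrow> nat \<Rightarrow> 'v \<Rightarrow> 'v \<Rightarrow> real" where
  "matpow P 0 = (\<lambda>u v. if u = v then 1 else 0)"
| "matpow P (Suc t) = (\<lambda>u w. \<Sum>v\<in>UNIV. matpow P t u v * P v w)"

definition stochastic :: "('v::finite \<Rightarrow> 'v \<Rightarrow> real) \<Rightarrow> bool" where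
  "stochastic P \<longleftrightarrow> (\<forall>u v. P u v \<ge> 0) \<and> (\<forall>u. (\<Sum>v\<in>UNIV. P u v) = 1)"

definition irreducible_chain :: "('v::finite \<Rightarrow> 'v \<Rightarrow> real) \<Rightarrow> bool" where
  "irreducible_chain P \<longleftrightarrow> (\<forall>u v. \<exists>t. matpow P t u v > 0)"

definition aperiodic_chain :: "('v::finite \<Rightarrow> 'v \<Rightarrow> real) \<Rightarrow> bool" where
  "aperiodic_chain P \<longleftrightarrow> (\<forall>v. Gcd {t::nat. t > 0 \<and> matpow P t v v > 0} = 1)"

definition ergodic_chain :: "('v::finite \<Rightarrow> 'v \<Rightarrow> real) \<Rightarrow> bool" where
  "ergodic_chain P \<longleftrightarrow> stochastic P \<and> irreducible_chain P \<and> aperiodic_chain P"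

definition stationary_dist :: "('v::finite \<Rightarrow> 'v \<Rightarrow> real) \<Rightarrow> ('v \<Rightarrow> real) \<Rightarrow> bool" where
  "stationary_dist P \<pi> \<longleftrightarrow> (\<forall>v. \<pi> v \<ge> 0) \<and> (\<Sum>v\<in>UNIV. \<pi> v) = 1 \<and>
     (\<forall>w. (\<Sum>v\<in>UNIV. \<pi> v * P v w) = \<pi> w)"

definition reversible_chain :: "('v::finite \<Rightarrow> 'v \<Rightarrow> real) \<Rightarrow> ('v \<Rightarrow> real) \<Rightarrow> bool" where
  "reversible_chain P \<pi> \<longleftrightarrow> (\<forall>u v. \<pi> u * P u v = \<pi> v * P v u)"

definition pi_min :: "('v::finite \<Rightarrow> real) \<Rightarrow> real" where
  "pi_min \<pi> = Min (range \<pi>)"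

definition nbhd :: "('v::finite \<Rightarrow> 'v \<Rightarrow> real) \<Rightarrow> 'v \<Rightarrow> 'v set" where
  "nbhd P v = {u. P v u > 0}"

definition max_degree :: "('v::finite \<Rightarrow> 'v \<Rightarrow> real) \<Rightarrow> nat" where
  "max_degree P = Max (range (\<lambda>v. card (nbhd P v)))"

definition tv_dist :: "('v::finite \<Rightarrow> real) \<Rightarrow> ('v \<Rightarrow> real) \<Rightarrow> real" where
  "tv_dist \<xi> \<zeta> = (1/2) * (\<Sum>v\<in>UNIV. \<bar>\<xi> v - \<zeta> v\<bar>)"

definition mixing_time :: "('v::finite \<Rightarrow> 'v \<Rightarrow> real) \<Rightarrow> ('v \<Rightarrow> real) \<Rightarrow> real \<Rightarrow> nat" where
  "mixing_time P \<pi> \<epsilon> = Max (range (\<lambda>v. LEAST t. tv_dist (matpow P t v) \<pi> \<le> \<epsilon>))"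

definition mixing_rate :: "('v::finite \<Rightarrow> 'v \<Rightarrow> real) \<Rightarrow> ('v \<Rightarrow> real) \<Rightarrow> nat" where
  "mixing_rate P \<pi> = mixing_time P \<pi> (1/4)"

definition I_cnt :: "('v \<Rightarrow> nat \<Rightarrow> 'v) \<Rightarrow> 'v \<Rightarrow> 'v \<Rightarrow> nat \<Rightarrow> nat \<Rightarrow> nat" where
  "I_cnt \<sigma> v u z z' = card {j. z \<le> j \<and> j < z' \<and> \<sigma> v j = u}"

definition functional_router :: "('v::finite \<Rightarrow> 'v \<Rightarrow> real) \<Rightarrow> ('v \<Rightarrow> nat \<Rightarrow> 'v) \<Rightarrow> bool" where
  "functional_router P \<sigma> \<longleftrightarrow> (\<forall>v i. \<sigma> v i \<in> nbhd P v)"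

definition srt_T :: "('v::finite \<Rightarrow> 'v \<Rightarrow> real) \<Rightarrow> ('v \<Rightarrow> nat \<Rightarrow> 'v) \<Rightarrow> nat \<Rightarrow> 'v \<Rightarrow> 'v set" where
  "srt_T P \<sigma> i v = {u \<in> nbhd P v. real (I_cnt \<sigma> v u 0 i) - real (i + 1) * P v u < 0}"

definition srt_router :: "('v::finite \<Rightarrow> 'v \<Rightarrow> real) \<Rightarrow> ('v \<Rightarrow> nat \<Rightarrow> 'v) \<Rightarrow> bool" where
  "srt_router P \<sigma> \<longleftrightarrow> (\<forall>v i. \<sigma> v i \<in> srt_T P \<sigma> i v \<and>
     (\<forall>u \<in> srt_T P \<sigma> i v.
        (real (I_cnt \<sigma> v (\<sigma> v i) 0 i) + 1) / P v (\<sigma> v i) \<le> (real (I_cnt \<sigma> v u 0 i) + 1) / P v u))"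

text \<open>Router dynamics. router_state t = (chi^(t), c^(t)) where c^(t)_v = sum_{s<t} chi^(s)_v.\<close>
primrec router_state :: "('v::finite \<Rightarrow> nat \<Rightarrow> 'v) \<Rightarrow> ('v \<Rightarrow> nat) \<Rightarrow> nat \<Rightarrow> ('v \<Rightarrow> nat) \<times> ('v \<Rightarrow> nat)" where
  "router_state \<sigma> \<chi>0 0 = (\<chi>0, (\<lambda>v. 0))"
| "router_state \<sigma> \<chi>0 (Suc t) =
     (let (x, c) = router_state \<sigma> \<chi>0 t; c' = (\<lambda>v. c v + x v)
      in ((\<lambda>u. \<Sum>v\<in>UNIV. I_cnt \<sigma> v u (c v) (c' v)), c'))"

definition chi :: "('v::finite \<Rightarrow> nat \<Rightarrow> 'v) \<Rightarrow> ('v \<Rightarrow> nat) \<Rightarrow> nat \<Rightarrow> 'v \<Rightarrow> nat" where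
  "chi \<sigma> \<chi>0 t = fst (router_state \<sigma> \<chi>0 t)"

definition mu :: "('v::finite \<Rightarrow> 'v \<Rightarrow> real) \<Rightarrow> ('v \<Rightarrow> nat) \<Rightarrow> nat \<Rightarrow> 'v \<Rightarrow> real" where
  "mu P \<chi>0 t w = (\<Sum>v\<in>UNIV. real (\<chi>0 v) * matpow P t v w)"

end

theory Submission
  imports Defs
begin

text \<open>Let e(t) be the increment, from time t to t + 1, of the router discrepancies
  I_v,u[0,z) - z P_v,u, each taken at the number z of tokens sent by v so far. Then
  \<chi>(t+1) = \<chi>(t) P + e(t), so Duhamel's formula writes \<chi>(T) - \<mu>(T) as
  \<Sum>_t e(t) (P^(T-1-t) - 1 \<pi>); the \<pi>-term may be inserted because e(t) has total mass zero.
  For SRT every discrepancy lies in [-1, 1], so summation by parts in t bounds the contribution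
  of an edge (v, u) by |P^0_u,w - \<pi>_w| + \<Sum>_s |P^(s+1)_u,w - P^s_u,w|, and at most \<Delta> edges
  enter u. Reversibility turns these column sums into row sums at the cost of a factor
  \<pi>_w / \<pi>_min, and the row sums are at most 2 dbar(s), where dbar(s) is the largest total
  variation distance between two rows of P^s. Finally dbar is submultiplicative with
  dbar(t*) \<le> 1/2, whence \<Sum>_s dbar(s) \<le> 2 t*.\<close>

section \<open>Matrix powers and stochastic matrices\<close>

lemma matpow_add:
  fixes P :: "'v::finite \<Rightarrow> 'v \<Rightarrow> real"
  shows "matpow P (s + t) u w = (\<Sum>v\<in>UNIV. matpow P s u v * matpow P t v w)"
proof (induction t arbitrary: w)
  case 0
  show ?case by (simp add: if_distrib cong: if_cong)
next
  case (Suc t)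
  have "matpow P (s + Suc t) u w = (\<Sum>x\<in>UNIV. (\<Sum>v\<in>UNIV. matpow P s u v * matpow P t v x) * P x w)"
    by (simp add: Suc)
  also have "\<dots> = (\<Sum>x\<in>UNIV. \<Sum>v\<in>UNIV. matpow P s u v * (matpow P t v x * P x w))"
    by (simp add: sum_distrib_right mult.assoc)
  also have "\<dots> = (\<Sum>v\<in>UNIV. \<Sum>x\<in>UNIV. matpow P s u v * (matpow P t v x * P x w))"
    by (rule sum.swap)
  also have "\<dots> = (\<Sum>v\<in>UNIV. matpow P s u v * matpow P (Suc t) v w)"
    by (simp add: sum_distrib_left)
  finally show ?case .
qed

lemma sum_delta_mult [simp]:
  fixes f :: "'v::finite \<Rightarrow> real"
  shows "(\<Sum>v\<in>UNIV. (if u = v then 1 else 0) * f v) = f u"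
    and "(\<Sum>v\<in>UNIV. f v * (if v = u then 1 else 0)) = f u"
proof -
  have "\<And>v. (if u = v then 1 else 0) * f v = (if u = v then f v else 0)"
    and "\<And>v. f v * (if v = u then 1 else 0) = (if v = u then f v else 0)" by simp_all
  then show "(\<Sum>v\<in>UNIV. (if u = v then 1 else 0) * f v) = f u"
    and "(\<Sum>v\<in>UNIV. f v * (if v = u then 1 else 0)) = f u" by (simp_all add: sum.delta sum.delta')
qed

lemma matpow_1 [simp]: "matpow P 1 = P"
  by (simp add: fun_eq_iff)

lemma matpow_Suc_left:
  fixes P :: "'v::finite \<Rightarrow> 'v \<Rightarrow> real"
  shows "matpow P (Suc t) u w = (\<Sum>v\<in>UNIV. P u v * matpow P t v w)"
  using matpow_add[of P 1 t u w] by simp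

lemma matpow_perturbed_evolution:
  fixes P :: "'v::finite \<Rightarrow> 'v \<Rightarrow> real"
  assumes "\<And>t u. x (Suc t) u = (\<Sum>v\<in>UNIV. x t v * P v u) + e t u"
  shows "x n w - (\<Sum>v\<in>UNIV. x 0 v * matpow P n v w)
           = (\<Sum>t<n. \<Sum>u\<in>UNIV. e t u * matpow P (n - Suc t) u w)"
proof (induction n arbitrary: w)
  case 0
  show ?case by simp
next
  case (Suc n)
  have step: "(\<Sum>y\<in>UNIV. (\<Sum>u\<in>UNIV. f u * matpow P k u y) * P y w)
      = (\<Sum>u\<in>UNIV. f u * matpow P (Suc k) u w)" for f :: "'v \<Rightarrow> real" and k
    by (simp add: sum_distrib_left sum_distrib_right mult.assoc) (rule sum.swap)
  have "x (Suc n) w - (\<Sum>v\<in>UNIV. x 0 v * matpow P (Suc n) v w)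
      = (\<Sum>y\<in>UNIV. (x n y - (\<Sum>v\<in>UNIV. x 0 v * matpow P n v y)) * P y w) + e n w"
    using step[of "x 0" n] by (simp add: assms left_diff_distrib sum_subtractf)
  also have "\<dots> = (\<Sum>t<n. \<Sum>y\<in>UNIV. (\<Sum>u\<in>UNIV. e t u * matpow P (n - Suc t) u y) * P y w) + e n w"
    unfolding Suc sum_distrib_right by (subst sum.swap) (rule refl)
  also have "\<dots> = (\<Sum>t<n. \<Sum>u\<in>UNIV. e t u * matpow P (Suc (n - Suc t)) u w) + e n w"
    by (simp only: step)
  also have "\<dots> = (\<Sum>t<Suc n. \<Sum>u\<in>UNIV. e t u * matpow P (Suc n - Suc t) u w)"
    by (simp add: Suc_diff_Suc)
  finally show ?case .
qed

locale stochastic_matrix =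
  fixes P :: "'v::finite \<Rightarrow> 'v \<Rightarrow> real"
  assumes stochastic: "stochastic P"
begin

lemma nonneg: "P u v \<ge> 0"
  using stochastic unfolding stochastic_def by blast

lemma row_sum: "(\<Sum>v\<in>UNIV. P u v) = 1"
  using stochastic unfolding stochastic_def by blast

lemma matpow_nonneg: "matpow P t u v \<ge> 0"
  by (induction t arbitrary: v) (auto intro!: sum_nonneg simp: nonneg)

lemma matpow_row_sum: "(\<Sum>v\<in>UNIV. matpow P t u v) = 1"
proof (induction t)
  case (Suc t)
  have "(\<Sum>w\<in>UNIV. matpow P (Suc t) u w) = (\<Sum>v\<in>UNIV. matpow P t u v * (\<Sum>w\<in>UNIV. P v w))"
    by (simp add: sum_distrib_left) (rule sum.swap)
  then show ?case by (simp add: row_sum Suc)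
qed simp

lemma matpow_pos_add:
  assumes "matpow P s x y > 0" "matpow P t y z > 0"
  shows "matpow P (s + t) x z > 0"
proof -
  have "0 < matpow P s x y * matpow P t y z" using assms by simp
  also have "\<dots> \<le> (\<Sum>v\<in>UNIV. matpow P s x v * matpow P t v z)"
    by (rule member_le_sum) (simp_all add: matpow_nonneg)
  also have "\<dots> = matpow P (s + t) x z" by (rule matpow_add[symmetric])
  finally show ?thesis .
qed

end

section \<open>Router counts and the SRT discrepancy\<close>

lemma I_cnt_0_Suc:
  "I_cnt \<sigma> v u 0 (Suc z) = I_cnt \<sigma> v u 0 z + (if \<sigma> v z = u then 1 else 0)"
proof -
  have "{j. 0 \<le> j \<and> j < Suc z \<and> \<sigma> v j = u}
      = {j. 0 \<le> j \<and> j < z \<and> \<sigma> v j = u} \<union> (if \<sigma> v z = u then {z} else {})"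
    by (auto simp: less_Suc_eq)
  then show ?thesis unfolding I_cnt_def by auto
qed

lemma I_cnt_concat:
  assumes "a \<le> b"
  shows "I_cnt \<sigma> v u 0 a + I_cnt \<sigma> v u a b = I_cnt \<sigma> v u 0 b"
proof -
  let ?J = "\<lambda>a b. {j. a \<le> j \<and> j < b \<and> \<sigma> v j = u}"
  have "?J 0 b = ?J 0 a \<union> ?J a b" using assms by auto
  moreover have "card (?J 0 a \<union> ?J a b) = card (?J 0 a) + card (?J a b)"
    by (rule card_Un_disjoint) auto
  ultimately show ?thesis unfolding I_cnt_def by simp
qed

lemma I_cnt_mono: "a \<le> b \<Longrightarrow> I_cnt \<sigma> v u 0 a \<le> I_cnt \<sigma> v u 0 b"
  using I_cnt_concat[of a b \<sigma> v u] by linarith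

lemma I_cnt_unchanged:
  assumes "a \<le> b" and "\<And>i. a \<le> i \<Longrightarrow> i < b \<Longrightarrow> \<sigma> v i \<noteq> u"
  shows "I_cnt \<sigma> v u 0 b = I_cnt \<sigma> v u 0 a"
proof -
  have "I_cnt \<sigma> v u a b = 0" unfolding I_cnt_def using assms(2) by auto
  then show ?thesis using I_cnt_concat[OF assms(1), of \<sigma> v u] by simp
qed

lemma sum_I_cnt:
  fixes \<sigma> :: "'v::finite \<Rightarrow> nat \<Rightarrow> 'v"
  shows "(\<Sum>u\<in>UNIV. I_cnt \<sigma> v u 0 z) = z"
proof (induction z)
  case 0
  then show ?case by (simp add: I_cnt_def)
next
  case (Suc z)
  then show ?case by (simp add: I_cnt_0_Suc sum.distrib)
qed

definition router_discrepancy ::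
    "('v::finite \<Rightarrow> 'v \<Rightarrow> real) \<Rightarrow> ('v \<Rightarrow> nat \<Rightarrow> 'v) \<Rightarrow> 'v \<Rightarrow> 'v \<Rightarrow> nat \<Rightarrow> real" where
  "router_discrepancy P \<sigma> v u z = real (I_cnt \<sigma> v u 0 z) - real z * P v u"

text \<open>The time at which \<open>z P\<^sub>v\<^sub>u\<close> reaches \<open>I\<^sub>v\<^sub>,\<^sub>u[0,i) + 1\<close>; the SRT router serves the
  eligible neighbour with the earliest deadline.\<close>
definition srt_deadline ::
    "('v::finite \<Rightarrow> 'v \<Rightarrow> real) \<Rightarrow> ('v \<Rightarrow> nat \<Rightarrow> 'v) \<Rightarrow> 'v \<Rightarrow> 'v \<Rightarrow> nat \<Rightarrow> real" where
  "srt_deadline P \<sigma> v u i = (real (I_cnt \<sigma> v u 0 i) + 1) / P v u"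

lemma srt_routerD:
  assumes "srt_router P \<sigma>"
  shows srt_router_pos: "P v (\<sigma> v i) > 0"
    and srt_router_behind: "real (I_cnt \<sigma> v (\<sigma> v i) 0 i) < real (Suc i) * P v (\<sigma> v i)"
    and srt_router_earliest:
      "u \<in> srt_T P \<sigma> i v \<Longrightarrow> srt_deadline P \<sigma> v (\<sigma> v i) i \<le> srt_deadline P \<sigma> v u i"
  using assms unfolding srt_router_def srt_T_def nbhd_def srt_deadline_def by auto

context stochastic_matrix
begin

lemma sum_router_discrepancy: "(\<Sum>u\<in>UNIV. router_discrepancy P \<sigma> v u z) = 0"
proof -
  have "(\<Sum>u\<in>UNIV. router_discrepancy P \<sigma> v u z)
      = real (\<Sum>u\<in>UNIV. I_cnt \<sigma> v u 0 z) - real z * (\<Sum>u\<in>UNIV. P v u)"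
    unfolding router_discrepancy_def by (simp add: sum_subtractf sum_distrib_left)
  then show ?thesis by (simp only: sum_I_cnt row_sum)
qed

lemma srt_deadline_mono: "i \<le> j \<Longrightarrow> srt_deadline P \<sigma> v u i \<le> srt_deadline P \<sigma> v u j"
  unfolding srt_deadline_def by (intro divide_right_mono) (simp_all add: I_cnt_mono nonneg)

lemma srt_discrepancy_upper:
  assumes "srt_router P \<sigma>"
  shows "router_discrepancy P \<sigma> v u z < 1"
proof (induction z)
  case 0
  show ?case by (simp add: router_discrepancy_def I_cnt_def)
next
  case (Suc z)
  show ?case
  proof (cases "\<sigma> v z = u")
    case True
    then show ?thesis using srt_router_behind[OF assms, of v z]
      by (simp add: router_discrepancy_def I_cnt_0_Suc algebra_simps)
  next
    case False
    then show ?thesis using Suc nonneg[of v u]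
      by (simp add: router_discrepancy_def I_cnt_0_Suc algebra_simps)
  qed
qed

lemma srt_count_le_deadline:
  assumes srt: "srt_router P \<sigma>"
    and punctual: "\<And>i. s \<le> i \<Longrightarrow> i < z \<Longrightarrow> srt_deadline P \<sigma> v (\<sigma> v i) i \<le> D"
    and "s \<le> k" "k \<le> z"
  shows "real (I_cnt \<sigma> v u 0 k) \<le> max (real (I_cnt \<sigma> v u 0 s)) (D * P v u)"
  using assms(3,4)
proof (induction k)
  case 0
  then show ?case by simp
next
  case (Suc k)
  show ?case
  proof (cases "s = Suc k")
    case False
    then have IH: "real (I_cnt \<sigma> v u 0 k) \<le> max (real (I_cnt \<sigma> v u 0 s)) (D * P v u)"
      using Suc by simp
    show ?thesis
    proof (cases "\<sigma> v k = u")
      case True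
      have "srt_deadline P \<sigma> v u k \<le> D" using punctual[of k] True False Suc.prems by simp
      then have "real (I_cnt \<sigma> v u 0 k) + 1 \<le> D * P v u"
        using srt_router_pos[OF srt, of v k] True by (simp add: srt_deadline_def divide_le_eq)
      then show ?thesis using True by (simp add: I_cnt_0_Suc)
    qed (use IH in \<open>simp add: I_cnt_0_Suc\<close>)
  qed simp
qed

lemma srt_late_neighbour_caught_up:
  assumes srt: "srt_router P \<sigma>" and "P v u > 0"
    and late: "srt_deadline P \<sigma> v u i < srt_deadline P \<sigma> v (\<sigma> v i) i"
  shows "real (Suc i) * P v u \<le> real (I_cnt \<sigma> v u 0 (Suc i))"
proof -
  have "u \<notin> srt_T P \<sigma> i v" using srt_router_earliest[OF srt] late by fastforce
  then have "real (Suc i) * P v u \<le> real (I_cnt \<sigma> v u 0 i)"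
    using \<open>P v u > 0\<close> unfolding srt_T_def nbhd_def by auto
  moreover have "\<sigma> v i \<noteq> u" using late by auto
  ultimately show ?thesis by (simp add: I_cnt_0_Suc)
qed

text \<open>Suppose \<open>u\<close> is more than one token behind at time \<open>z\<close>, and let \<open>s\<close> be the start of the
  maximal period before \<open>z\<close> in which all tokens are sent by the deadline \<open>D\<close> of \<open>u\<close>. Just
  before \<open>s\<close> a token was sent late, so every neighbour served during \<open>[s, z)\<close>, and \<open>u\<close> itself,
  had no deficit at time \<open>s\<close>. Comparing with the \<open>z - s\<close> tokens actually sent in \<open>[s, z)\<close> gives a
  contradiction.\<close>
lemma srt_discrepancy_lower:
  assumes srt: "srt_router P \<sigma>" and "P v u > 0"
  shows "router_discrepancy P \<sigma> v u z > -1"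
proof (rule ccontr)
  let ?N = "\<lambda>u i. real (I_cnt \<sigma> v u 0 i)"
  let ?due = "\<lambda>i. srt_deadline P \<sigma> v (\<sigma> v i) i"
  assume "\<not> ?thesis"
  then have behind: "?N u z + 1 \<le> real z * P v u" by (simp add: router_discrepancy_def)
  define D where "D = srt_deadline P \<sigma> v u z"
  have D_le: "D \<le> real z"
    using behind \<open>P v u > 0\<close> by (simp add: D_def srt_deadline_def divide_le_eq)
  define s where "s = (LEAST s. \<forall>i. s \<le> i \<longrightarrow> i < z \<longrightarrow> ?due i \<le> D)"
  have "\<forall>i. s \<le> i \<longrightarrow> i < z \<longrightarrow> ?due i \<le> D"
    unfolding s_def by (rule LeastI[of _ z]) simp
  then have punctual: "\<And>i. s \<le> i \<Longrightarrow> i < z \<Longrightarrow> ?due i \<le> D" by blast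
  have "s \<le> z" unfolding s_def by (rule Least_le) auto
  have caught_up: "real s * P v u' \<le> ?N u' s"
    if "P v u' > 0" "srt_deadline P \<sigma> v u' (s - 1) \<le> D" for u'
  proof (cases s)
    case (Suc i)
    have "\<not> ?due i \<le> D"
    proof
      assume "?due i \<le> D"
      then have "\<forall>j. i \<le> j \<longrightarrow> j < z \<longrightarrow> ?due j \<le> D"
        using punctual by (metis Suc Suc_leI le_neq_implies_less)
      moreover have "i < s" using Suc by simp
      ultimately show False unfolding s_def using not_less_Least by blast
    qed
    then show ?thesis
      using srt_late_neighbour_caught_up[OF srt that(1)] that(2) Suc by fastforce
  qed simp
  have gain: "?N u' z - ?N u' s \<le> (real z - real s) * P v u' - (if u' = u then 1 else 0)" for u'
  proof -
    consider "u' = u" | "u' \<noteq> u" "\<exists>i. s \<le> i \<and> i < z \<and> \<sigma> v i = u'"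
      | "u' \<noteq> u" "\<forall>i. s \<le> i \<longrightarrow> i < z \<longrightarrow> \<sigma> v i \<noteq> u'"
      by blast
    then show ?thesis
    proof cases
      case 1
      have "srt_deadline P \<sigma> v u (s - 1) \<le> D"
        unfolding D_def using \<open>s \<le> z\<close> by (intro srt_deadline_mono) simp
      then show ?thesis using 1 caught_up[OF \<open>P v u > 0\<close>] behind by (simp add: algebra_simps)
    next
      case 2
      then obtain i where i: "s \<le> i" "i < z" "\<sigma> v i = u'" by blast
      have pos: "P v u' > 0" using srt_router_pos[OF srt, of v i] i by simp
      have "srt_deadline P \<sigma> v u' (s - 1) \<le> srt_deadline P \<sigma> v u' i"
        using i by (intro srt_deadline_mono) simp
      also have "\<dots> \<le> D" using punctual[of i] i by simp
      finally have start: "real s * P v u' \<le> ?N u' s" by (rule caught_up[OF pos])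
      have "?N u' z \<le> max (?N u' s) (D * P v u')"
        using srt_count_le_deadline[OF srt punctual \<open>s \<le> z\<close>] by simp
      also have "\<dots> \<le> max (?N u' s) (real z * P v u')"
        using mult_right_mono[OF D_le nonneg[of v u']] by (rule max.mono[OF order_refl])
      finally have "?N u' z \<le> max (?N u' s) (real z * P v u')" .
      moreover have "real s * P v u' \<le> real z * P v u'"
        using \<open>s \<le> z\<close> nonneg[of v u'] by (simp add: mult_right_mono)
      ultimately show ?thesis using 2 start by (simp add: max_def algebra_simps split: if_split_asm)
    next
      case 3
      then have "I_cnt \<sigma> v u' 0 z = I_cnt \<sigma> v u' 0 s" by (intro I_cnt_unchanged \<open>s \<le> z\<close>) auto
      moreover have "0 \<le> (real z - real s) * P v u'" using \<open>s \<le> z\<close> nonneg[of v u'] by simp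
      ultimately show ?thesis using 3 by simp
    qed
  qed
  have "real z - real s = (\<Sum>u'\<in>UNIV. ?N u' z - ?N u' s)"
    by (simp add: sum_subtractf flip: of_nat_sum) (simp add: sum_I_cnt)
  also have "\<dots> \<le> (\<Sum>u'\<in>UNIV. (real z - real s) * P v u' - (if u' = u then 1 else 0))"
    by (rule sum_mono) (rule gain)
  also have "\<dots> = real z - real s - 1"
    by (simp add: sum_subtractf row_sum flip: sum_distrib_left)
  finally show False by simp
qed

lemma srt_discrepancy_non_neighbour:
  assumes "srt_router P \<sigma>" and "\<not> P v u > 0"
  shows "router_discrepancy P \<sigma> v u z = 0"
proof -
  have "\<sigma> v i \<noteq> u" for i using srt_router_pos[OF assms(1), of v i] assms(2) by auto
  then have "I_cnt \<sigma> v u 0 z = 0" unfolding I_cnt_def by simp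
  moreover have "P v u = 0" using assms(2) nonneg[of v u] by simp
  ultimately show ?thesis by (simp add: router_discrepancy_def)
qed

lemma srt_discrepancy_bound:
  assumes "srt_router P \<sigma>"
  shows "\<bar>router_discrepancy P \<sigma> v u z\<bar> \<le> 1"
proof (cases "P v u > 0")
  case True
  then show ?thesis
    using srt_discrepancy_lower[OF assms True, of z] srt_discrepancy_upper[OF assms, of v u z]
    by simp
qed (simp add: srt_discrepancy_non_neighbour[OF assms])

end

section \<open>Total variation and the Dobrushin contraction\<close>

lemma tv_dist_commute: "tv_dist a b = tv_dist b a"
  unfolding tv_dist_def by (simp add: abs_minus_commute)

lemma tv_dist_triangle: "tv_dist a c \<le> tv_dist a b + tv_dist b c"
proof -
  have "(\<Sum>v\<in>UNIV. \<bar>a v - c v\<bar>) \<le> (\<Sum>v\<in>UNIV. \<bar>a v - b v\<bar> + \<bar>b v - c v\<bar>)"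
    by (rule sum_mono) linarith
  then show ?thesis unfolding tv_dist_def by (simp add: sum.distrib)
qed

lemma tv_dist_le_1:
  assumes "\<And>v. a v \<ge> 0" "\<And>v. b v \<ge> 0" "(\<Sum>v\<in>UNIV. a v) = 1" "(\<Sum>v\<in>UNIV. b v) = 1"
  shows "tv_dist a b \<le> 1"
proof -
  have "(\<Sum>v\<in>UNIV. \<bar>a v - b v\<bar>) \<le> (\<Sum>v\<in>UNIV. a v + b v)"
    by (rule sum_mono) (use assms in \<open>simp add: abs_le_iff\<close>)
  then show ?thesis unfolding tv_dist_def using assms by (simp add: sum.distrib)
qed

text \<open>The test function \<open>f\<close> realises the \<open>\<ell>\<^sub>1\<close>-norm of \<open>\<mu> Q\<close>; its oscillation is at most
  \<open>2 c\<close>, and since \<open>\<mu>\<close> has total mass zero it may be centred.\<close>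
lemma dobrushin_contraction:
  fixes \<mu> :: "'a::finite \<Rightarrow> real" and Q :: "'a \<Rightarrow> 'b::finite \<Rightarrow> real"
  assumes mass: "(\<Sum>x\<in>UNIV. \<mu> x) = 0" and tv: "\<And>x y. tv_dist (Q x) (Q y) \<le> c"
  shows "(\<Sum>z\<in>UNIV. \<bar>\<Sum>x\<in>UNIV. \<mu> x * Q x z\<bar>) \<le> c * (\<Sum>x\<in>UNIV. \<bar>\<mu> x\<bar>)"
proof -
  define S where "S z = (\<Sum>x\<in>UNIV. \<mu> x * Q x z)" for z
  define f where "f x = (\<Sum>z\<in>UNIV. sgn (S z) * Q x z)" for x
  have osc: "f x - f y \<le> 2 * c" for x y
  proof -
    have "f x - f y = (\<Sum>z\<in>UNIV. sgn (S z) * (Q x z - Q y z))"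
      unfolding f_def by (simp add: sum_subtractf right_diff_distrib)
    also have "\<dots> \<le> (\<Sum>z\<in>UNIV. \<bar>Q x z - Q y z\<bar>)"
      by (rule sum_mono) (simp add: sgn_real_def abs_if)
    also have "\<dots> \<le> 2 * c" using tv[of x y] unfolding tv_dist_def by simp
    finally show ?thesis .
  qed
  define m where "m = (Max (range f) + Min (range f)) / 2"
  have centred: "\<bar>f x - m\<bar> \<le> c" for x
  proof -
    have "Max (range f) \<in> range f" "Min (range f) \<in> range f" by (simp_all add: Max_in Min_in)
    then obtain a b where "Max (range f) = f a" "Min (range f) = f b" by blast
    moreover have "f x \<le> Max (range f)" "Min (range f) \<le> f x" by simp_all
    ultimately show ?thesis using osc[of a b] unfolding m_def by (simp add: abs_le_iff field_simps)
  qed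
  have "(\<Sum>z\<in>UNIV. \<bar>S z\<bar>) = (\<Sum>z\<in>UNIV. sgn (S z) * S z)"
    by (rule sum.cong) (simp_all add: sgn_real_def)
  also have "\<dots> = (\<Sum>z\<in>UNIV. \<Sum>x\<in>UNIV. sgn (S z) * (\<mu> x * Q x z))"
    by (simp add: S_def sum_distrib_left)
  also have "\<dots> = (\<Sum>x\<in>UNIV. \<mu> x * f x)"
    unfolding f_def by (subst sum.swap) (simp add: sum_distrib_left algebra_simps)
  also have "\<dots> = (\<Sum>x\<in>UNIV. \<mu> x * (f x - m))"
    using mass by (simp add: right_diff_distrib sum_subtractf flip: sum_distrib_right)
  also have "\<dots> \<le> (\<Sum>x\<in>UNIV. \<bar>\<mu> x\<bar> * c)"
  proof (rule sum_mono)
    fix x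
    have "\<mu> x * (f x - m) \<le> \<bar>\<mu> x\<bar> * \<bar>f x - m\<bar>" by (simp add: abs_mult[symmetric])
    also have "\<dots> \<le> \<bar>\<mu> x\<bar> * c" by (rule mult_left_mono[OF centred]) simp
    finally show "\<mu> x * (f x - m) \<le> \<bar>\<mu> x\<bar> * c" .
  qed
  finally show ?thesis by (simp add: S_def sum_distrib_left mult.commute)
qed

definition tv_diameter :: "('v::finite \<Rightarrow> 'v \<Rightarrow> real) \<Rightarrow> nat \<Rightarrow> real" where
  "tv_diameter P t = Max (range (\<lambda>(x, y). tv_dist (matpow P t x) (matpow P t y)))"

lemma tv_dist_le_tv_diameter: "tv_dist (matpow P t x) (matpow P t y) \<le> tv_diameter P t"
  unfolding tv_diameter_def by (rule Max_ge) (auto intro: rev_image_eqI[of "(x, y)"])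

lemma tv_diameter_le:
  "(\<And>x y. tv_dist (matpow P t x) (matpow P t y) \<le> c) \<Longrightarrow> tv_diameter P t \<le> c"
  unfolding tv_diameter_def by (subst Max_le_iff) auto

lemma tv_diameter_nonneg: "tv_diameter P t \<ge> 0"
  using tv_dist_le_tv_diameter[of P t undefined undefined] by (simp add: tv_dist_def)

context stochastic_matrix
begin

lemma tv_dist_matpow_le_1: "tv_dist (matpow P t x) (matpow P t y) \<le> 1"
  by (rule tv_dist_le_1) (simp_all add: matpow_nonneg matpow_row_sum)

lemma tv_diameter_le_1: "tv_diameter P t \<le> 1"
  by (rule tv_diameter_le) (rule tv_dist_matpow_le_1)

lemma tv_dist_evolve_le:
  assumes "(\<Sum>x\<in>UNIV. a x) = (\<Sum>x\<in>UNIV. b x)"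
  shows "tv_dist (\<lambda>z. \<Sum>x\<in>UNIV. a x * matpow P t x z) (\<lambda>z. \<Sum>x\<in>UNIV. b x * matpow P t x z)
           \<le> tv_diameter P t * tv_dist a b"
proof -
  have "(\<Sum>z\<in>UNIV. \<bar>\<Sum>x\<in>UNIV. (a x - b x) * matpow P t x z\<bar>)
      \<le> tv_diameter P t * (\<Sum>x\<in>UNIV. \<bar>a x - b x\<bar>)"
    by (rule dobrushin_contraction) (simp_all add: assms sum_subtractf tv_dist_le_tv_diameter)
  then show ?thesis unfolding tv_dist_def by (simp add: left_diff_distrib sum_subtractf)
qed

lemma tv_diameter_add: "tv_diameter P (s + t) \<le> tv_diameter P s * tv_diameter P t"
proof (rule tv_diameter_le)
  fix x y
  have "tv_dist (matpow P (s + t) x) (matpow P (s + t) y)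
      \<le> tv_diameter P t * tv_dist (matpow P s x) (matpow P s y)"
    using tv_dist_evolve_le[of "matpow P s x" "matpow P s y" t]
    by (simp add: matpow_row_sum matpow_add[abs_def])
  also have "\<dots> \<le> tv_diameter P t * tv_diameter P s"
    by (rule mult_left_mono[OF tv_dist_le_tv_diameter tv_diameter_nonneg])
  finally show "tv_dist (matpow P (s + t) x) (matpow P (s + t) y) \<le> tv_diameter P s * tv_diameter P t"
    by (simp add: mult.commute)
qed

lemma tv_diameter_antimono: "s \<le> t \<Longrightarrow> tv_diameter P t \<le> tv_diameter P s"
  using tv_diameter_add[of s "t - s"]
    mult_left_mono[OF tv_diameter_le_1[of "t - s"] tv_diameter_nonneg[of P s]]
  by simp

lemma tv_diameter_mult: "tv_diameter P (k * t) \<le> tv_diameter P t ^ k"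
proof (induction k)
  case 0
  show ?case using tv_diameter_le_1[of 0] by simp
next
  case (Suc k)
  have "tv_diameter P (t + k * t) \<le> tv_diameter P t * tv_diameter P (k * t)"
    by (rule tv_diameter_add)
  also have "\<dots> \<le> tv_diameter P t * tv_diameter P t ^ k"
    by (rule mult_left_mono[OF Suc tv_diameter_nonneg])
  finally show ?case by simp
qed

lemma tv_dist_matpow_Suc: "tv_dist (matpow P (Suc s) w) (matpow P s w) \<le> tv_diameter P s"
proof -
  have "matpow P (Suc s) w = (\<lambda>z. \<Sum>x\<in>UNIV. P w x * matpow P s x z)"
    by (rule ext) (rule matpow_Suc_left)
  moreover have "matpow P s w = (\<lambda>z. \<Sum>x\<in>UNIV. matpow P 0 w x * matpow P s x z)" by simp
  ultimately have "tv_dist (matpow P (Suc s) w) (matpow P s w)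
      \<le> tv_diameter P s * tv_dist (P w) (matpow P 0 w)"
    using tv_dist_evolve_le[of "P w" "matpow P 0 w" s] by (simp only: matpow_row_sum matpow_1 row_sum)
  also have "\<dots> \<le> tv_diameter P s * 1"
    by (intro mult_left_mono tv_dist_le_1 tv_diameter_nonneg)
      (simp_all add: nonneg row_sum matpow_nonneg matpow_row_sum)
  finally show ?thesis by simp
qed

end

section \<open>Reversible ergodic chains and the mixing rate\<close>

lemma ex_pos_of_sum_eq_1:
  fixes f :: "'a::finite \<Rightarrow> real"
  assumes "(\<Sum>x\<in>UNIV. f x) = 1"
  obtains x where "f x > 0"
proof -
  have "\<not> (\<forall>x. f x \<le> 0)"
  proof
    assume "\<forall>x. f x \<le> 0"
    then have "(\<Sum>x\<in>UNIV. f x) \<le> 0" by (simp add: sum_nonpos)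
    with assms show False by simp
  qed
  then show ?thesis using that by (auto simp: not_le)
qed

lemma sum_le_of_halving:
  fixes f :: "nat \<Rightarrow> real"
  assumes "t \<ge> 1" and nonneg: "\<And>s. f s \<ge> 0" and halving: "\<And>k s. k * t \<le> s \<Longrightarrow> f s \<le> (1/2) ^ k"
  shows "(\<Sum>s<n. f s) \<le> 2 * real t"
proof -
  have "(\<Sum>s<n. f s) \<le> (\<Sum>s<n * t. f s)"
    by (rule sum_mono2) (use \<open>t \<ge> 1\<close> nonneg in auto)
  also have "\<dots> = (\<Sum>k<n. \<Sum>s\<in>{k * t..<k * t + t}. f s)"
    by (rule sum.nat_group[symmetric])
  also have "\<dots> \<le> (\<Sum>k<n. real t * (1/2) ^ k)"
  proof (rule sum_mono)
    fix k
    have "(\<Sum>s\<in>{k * t..<k * t + t}. f s) \<le> (\<Sum>s\<in>{k * t..<k * t + t}. (1/2) ^ k)"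
      by (rule sum_mono) (simp add: halving)
    then show "(\<Sum>s\<in>{k * t..<k * t + t}. f s) \<le> real t * (1/2) ^ k" by simp
  qed
  also have "\<dots> = real t * (2 - 2 * (1/2) ^ n)"
    by (induction n) (simp_all add: sum_distrib_left[symmetric] algebra_simps)
  also have "\<dots> \<le> 2 * real t" by (simp add: right_diff_distrib)
  finally show ?thesis .
qed

locale reversible_ergodic_chain = stochastic_matrix P
  for P :: "'v::finite \<Rightarrow> 'v \<Rightarrow> real" +
  fixes \<pi> :: "'v \<Rightarrow> real"
  assumes irreducible: "irreducible_chain P"
    and aperiodic: "aperiodic_chain P"
    and reversible: "reversible_chain P \<pi>"
    and stationary: "stationary_dist P \<pi>"
begin

lemma pi_nonneg: "\<pi> v \<ge> 0"
  and sum_pi: "(\<Sum>v\<in>UNIV. \<pi> v) = 1"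
  and pi_stationary: "(\<Sum>v\<in>UNIV. \<pi> v * P v w) = \<pi> w"
  using stationary unfolding stationary_dist_def by blast+

lemma matpow_stationary: "(\<Sum>v\<in>UNIV. \<pi> v * matpow P t v w) = \<pi> w"
proof (induction t arbitrary: w)
  case (Suc t)
  have "(\<Sum>v\<in>UNIV. \<pi> v * matpow P (Suc t) v w) = (\<Sum>x\<in>UNIV. (\<Sum>v\<in>UNIV. \<pi> v * matpow P t v x) * P x w)"
    by (simp add: sum_distrib_left sum_distrib_right mult.assoc) (rule sum.swap)
  then show ?case by (simp add: Suc pi_stationary)
qed simp

lemma matpow_reversible: "\<pi> u * matpow P t u w = \<pi> w * matpow P t w u"
proof (induction t arbitrary: w)
  case (Suc t)
  have "\<pi> u * matpow P (Suc t) u w = (\<Sum>v\<in>UNIV. (\<pi> u * matpow P t u v) * P v w)"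
    by (simp add: sum_distrib_left mult.assoc)
  also have "\<dots> = (\<Sum>v\<in>UNIV. matpow P t v u * (\<pi> v * P v w))"
    by (simp only: Suc.IH) (simp add: algebra_simps)
  also have "\<dots> = (\<Sum>v\<in>UNIV. matpow P t v u * (\<pi> w * P w v))"
    using reversible unfolding reversible_chain_def by simp
  also have "\<dots> = \<pi> w * (\<Sum>v\<in>UNIV. P w v * matpow P t v u)"
    by (simp add: sum_distrib_left algebra_simps)
  finally show ?case by (simp only: matpow_Suc_left)
qed simp

lemma pi_pos: "\<pi> w > 0"
proof -
  obtain v where "\<pi> v > 0" using sum_pi by (rule ex_pos_of_sum_eq_1)
  moreover obtain t where "matpow P t v w > 0"
    using irreducible unfolding irreducible_chain_def by blast
  ultimately have "0 < \<pi> v * matpow P t v w" by simp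
  also have "\<dots> \<le> (\<Sum>v\<in>UNIV. \<pi> v * matpow P t v w)"
    by (rule member_le_sum) (simp_all add: pi_nonneg matpow_nonneg)
  also have "\<dots> = \<pi> w" by (rule matpow_stationary)
  finally show ?thesis .
qed

lemma pi_min_pos: "pi_min \<pi> > 0"
  and pi_min_le: "pi_min \<pi> \<le> \<pi> u"
proof -
  have "pi_min \<pi> \<in> range \<pi>" unfolding pi_min_def by (rule Min_in) auto
  then show "pi_min \<pi> > 0" using pi_pos by auto
  show "pi_min \<pi> \<le> \<pi> u" unfolding pi_min_def by (rule Min_le) auto
qed

lemma P_pos_sym: "P u v > 0 \<longleftrightarrow> P v u > 0"
proof -
  have "P u v > 0 \<longleftrightarrow> \<pi> u * P u v > 0" using pi_pos[of u] by (simp add: zero_less_mult_iff)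
  also have "\<dots> \<longleftrightarrow> \<pi> v * P v u > 0" using reversible unfolding reversible_chain_def by simp
  also have "\<dots> \<longleftrightarrow> P v u > 0" using pi_pos[of v] by (simp add: zero_less_mult_iff)
  finally show ?thesis .
qed

lemma matpow_2_diag_pos: "matpow P 2 v v > 0"
proof -
  obtain u where u: "P v u > 0" using row_sum by (rule ex_pos_of_sum_eq_1)
  then have "matpow P (1 + 1) v v > 0"
    using P_pos_sym by (intro matpow_pos_add[of 1 v u]) simp_all
  then show ?thesis by (simp only: one_add_one)
qed

lemma matpow_odd_diag_pos: "\<exists>m. odd m \<and> matpow P m v v > 0"
proof (rule ccontr)
  assume "\<not> ?thesis"
  then have "2 dvd Gcd {t. t > 0 \<and> matpow P t v v > 0}" by (intro Gcd_greatest) auto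
  then show False using aperiodic unfolding aperiodic_chain_def by simp
qed

text \<open>Return times \<open>2\<close> (by reversibility) and some odd \<open>m\<close> (by aperiodicity) generate every
  \<open>n \<ge> m\<close>.\<close>
lemma matpow_diag_eventually_pos: "\<exists>m. \<forall>n\<ge>m. matpow P n v v > 0"
proof -
  have even: "matpow P (2 * k) v v > 0" for k
  proof (induction k)
    case (Suc k)
    then show ?case using matpow_pos_add[OF matpow_2_diag_pos Suc] by simp
  qed simp
  obtain m where m: "odd m" "matpow P m v v > 0" using matpow_odd_diag_pos by blast
  have "matpow P n v v > 0" if "n \<ge> m" for n
  proof (cases "even n")
    case True
    then show ?thesis using even[of "n div 2"] by simp
  next
    case False
    then have "n = m + 2 * ((n - m) div 2)" using m(1) that by simp
    then show ?thesis using matpow_pos_add[OF m(2) even] by metis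
  qed
  then show ?thesis by blast
qed

lemma matpow_eventually_all_pos: "\<exists>R. \<forall>x y. matpow P R x y > 0"
proof -
  define k where "k x y = (SOME t. matpow P t x y > 0)" for x y
  define m where "m y = (SOME m. \<forall>n\<ge>m. matpow P n y y > 0)" for y
  have k: "matpow P (k x y) x y > 0" for x y
    unfolding k_def by (rule someI_ex) (use irreducible irreducible_chain_def in blast)
  have m: "matpow P n y y > 0" if "n \<ge> m y" for y n
    using someI_ex[OF matpow_diag_eventually_pos[of y]] that unfolding m_def by blast
  define R where "R = (\<Sum>p\<in>UNIV. k (fst p) (snd p) + m (snd p))"
  have "matpow P R x y > 0" for x y
  proof -
    have le: "k x y + m y \<le> R"
      unfolding R_def using member_le_sum[of "(x, y)" UNIV "\<lambda>p. k (fst p) (snd p) + m (snd p)"] by simp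
    then have "matpow P (k x y + (R - k x y)) x y > 0"
      by (intro matpow_pos_add[OF k m]) simp
    then show ?thesis using le by simp
  qed
  then show ?thesis by blast
qed

lemma tv_diameter_lt_1: "\<exists>R. tv_diameter P R < 1"
proof -
  obtain R where R: "\<And>x y. matpow P R x y > 0" using matpow_eventually_all_pos by blast
  have "tv_dist (matpow P R x) (matpow P R y) < 1" for x y
  proof -
    have "(\<Sum>z\<in>UNIV. \<bar>matpow P R x z - matpow P R y z\<bar>) < (\<Sum>z\<in>UNIV. matpow P R x z + matpow P R y z)"
      by (rule sum_strict_mono_ex1) (use R matpow_nonneg in \<open>auto simp: abs_if\<close>)
    then show ?thesis unfolding tv_dist_def by (simp add: sum.distrib matpow_row_sum)
  qed
  then have "tv_diameter P R < 1" unfolding tv_diameter_def by (subst Max_less_iff) auto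
  then show ?thesis ..
qed

lemma tv_dist_pi_le_tv_diameter: "tv_dist (matpow P t v) \<pi> \<le> tv_diameter P t"
proof -
  have "tv_dist (matpow P t v) \<pi> \<le> tv_diameter P t * tv_dist (matpow P 0 v) \<pi>"
    using tv_dist_evolve_le[of "matpow P 0 v" \<pi> t] by (simp add: sum_pi matpow_stationary)
  also have "\<dots> \<le> tv_diameter P t * 1"
    by (intro mult_left_mono tv_dist_le_1 tv_diameter_nonneg)
      (simp_all add: pi_nonneg sum_pi matpow_nonneg matpow_row_sum)
  finally show ?thesis by simp
qed

lemma tv_dist_pi_antimono:
  assumes "s \<le> t"
  shows "tv_dist (matpow P t v) \<pi> \<le> tv_dist (matpow P s v) \<pi>"
proof -
  have "matpow P t v = (\<lambda>z. \<Sum>x\<in>UNIV. matpow P s v x * matpow P (t - s) x z)"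
    using assms matpow_add[of P s "t - s" v] by fastforce
  moreover have "\<pi> = (\<lambda>z. \<Sum>x\<in>UNIV. \<pi> x * matpow P (t - s) x z)"
    by (simp add: matpow_stationary)
  ultimately have "tv_dist (matpow P t v) \<pi> \<le> tv_diameter P (t - s) * tv_dist (matpow P s v) \<pi>"
    using tv_dist_evolve_le[of "matpow P s v" \<pi> "t - s"] by (simp add: matpow_row_sum sum_pi)
  also have "\<dots> \<le> 1 * tv_dist (matpow P s v) \<pi>"
    by (intro mult_right_mono tv_diameter_le_1) (simp add: tv_dist_def sum_nonneg)
  finally show ?thesis by simp
qed

lemma tv_dist_mixing_rate: "tv_dist (matpow P (mixing_rate P \<pi>) v) \<pi> \<le> 1/4"
proof -
  define L where "L v = (LEAST t. tv_dist (matpow P t v) \<pi> \<le> 1/4)" for v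
  obtain R where "tv_diameter P R < 1" using tv_diameter_lt_1 by blast
  then obtain k where k: "tv_diameter P R ^ k < 1/4"
    using real_arch_pow_inv[of "1/4"] by auto
  have "tv_dist (matpow P (k * R) v) \<pi> \<le> 1/4"
    using tv_dist_pi_le_tv_diameter[of "k * R" v] tv_diameter_mult[of k R] k by simp
  then have "tv_dist (matpow P (L v) v) \<pi> \<le> 1/4" unfolding L_def by (rule LeastI)
  moreover have "L v \<le> mixing_rate P \<pi>"
    unfolding mixing_rate_def mixing_time_def L_def by (rule Max_ge) auto
  ultimately show ?thesis using tv_dist_pi_antimono by (meson order_trans)
qed

lemma tv_diameter_mixing_rate: "tv_diameter P (mixing_rate P \<pi>) \<le> 1/2"
proof (rule tv_diameter_le)
  fix x y
  let ?t = "mixing_rate P \<pi>"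
  have "tv_dist (matpow P ?t x) (matpow P ?t y) \<le> tv_dist (matpow P ?t x) \<pi> + tv_dist \<pi> (matpow P ?t y)"
    by (rule tv_dist_triangle)
  then show "tv_dist (matpow P ?t x) (matpow P ?t y) \<le> 1/2"
    using tv_dist_mixing_rate[of x] tv_dist_mixing_rate[of y] tv_dist_commute[of \<pi>] by simp
qed

text \<open>If the mixing rate is \<open>0\<close> then \<open>P\<^sup>0 = I\<close> has rows at distance \<open>\<le> 1/2\<close>, which forces a
  single state.\<close>
lemma tv_diameter_0_le_mixing_rate: "tv_diameter P 0 \<le> real (mixing_rate P \<pi>)"
proof (cases "mixing_rate P \<pi> = 0")
  case True
  have "tv_dist (matpow P 0 x) (matpow P 0 y) \<le> 0" for x y
  proof (cases "x = y")
    case False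
    have "(\<Sum>z\<in>UNIV. \<bar>matpow P 0 x z - matpow P 0 y z\<bar>) = (\<Sum>z\<in>UNIV. matpow P 0 x z + matpow P 0 y z)"
      using False by (intro sum.cong) auto
    then have "tv_dist (matpow P 0 x) (matpow P 0 y) = 1"
      unfolding tv_dist_def by (simp add: sum.distrib matpow_row_sum)
    moreover have "tv_dist (matpow P 0 x) (matpow P 0 y) \<le> 1/2"
      using tv_dist_le_tv_diameter[of P 0 x y] tv_diameter_mixing_rate True by simp
    ultimately show ?thesis by simp
  qed (simp add: tv_dist_def)
  then have "tv_diameter P 0 \<le> 0" by (rule tv_diameter_le)
  then show ?thesis by simp
next
  case False
  then show ?thesis using tv_diameter_le_1[of 0] by simp
qed

lemma sum_tv_diameter_le: "(\<Sum>s<n. tv_diameter P s) \<le> 2 * real (mixing_rate P \<pi>)"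
proof (cases "mixing_rate P \<pi> = 0")
  case True
  have "tv_diameter P s \<le> 0" for s
    using tv_diameter_antimono[of 0 s] tv_diameter_0_le_mixing_rate True by simp
  then have "(\<Sum>s<n. tv_diameter P s) \<le> 0" by (rule sum_nonpos)
  then show ?thesis by simp
next
  case False
  let ?t = "mixing_rate P \<pi>"
  show ?thesis
  proof (rule sum_le_of_halving)
    show "tv_diameter P s \<le> (1/2) ^ k" if "k * ?t \<le> s" for k s
    proof -
      have "tv_diameter P s \<le> tv_diameter P (k * ?t)" using that by (rule tv_diameter_antimono)
      also have "\<dots> \<le> tv_diameter P ?t ^ k" by (rule tv_diameter_mult)
      also have "\<dots> \<le> (1/2) ^ k"
        by (intro power_mono tv_diameter_mixing_rate tv_diameter_nonneg)
      finally show ?thesis .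
    qed
  qed (use False tv_diameter_nonneg in auto)
qed

end

section \<open>The router dynamics\<close>

lemma abel_summation_bound:
  fixes \<psi> g :: "nat \<Rightarrow> real"
  assumes "\<psi> 0 = 0" and bounded: "\<And>t. \<bar>\<psi> t\<bar> \<le> 1"
  shows "\<bar>\<Sum>t<Suc n. (\<psi> (Suc t) - \<psi> t) * g t\<bar> \<le> \<bar>g n\<bar> + (\<Sum>t<n. \<bar>g t - g (Suc t)\<bar>)"
proof -
  have scaled: "\<bar>\<psi> t * a\<bar> \<le> \<bar>a\<bar>" for t a
    using mult_right_mono[OF bounded[of t] abs_ge_zero[of a]] by (simp add: abs_mult)
  have "(\<Sum>t<Suc n. (\<psi> (Suc t) - \<psi> t) * g t)
      = \<psi> (Suc n) * g n + (\<Sum>t<n. \<psi> (Suc t) * (g t - g (Suc t)))"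
    by (induction n) (simp_all add: \<open>\<psi> 0 = 0\<close> algebra_simps)
  also have "\<bar>\<dots>\<bar> \<le> \<bar>\<psi> (Suc n) * g n\<bar> + (\<Sum>t<n. \<bar>\<psi> (Suc t) * (g t - g (Suc t))\<bar>)"
    by (rule order_trans[OF abs_triangle_ineq add_left_mono[OF sum_abs]])
  also have "\<dots> \<le> \<bar>g n\<bar> + (\<Sum>t<n. \<bar>g t - g (Suc t)\<bar>)"
    by (intro add_mono sum_mono scaled)
  finally show ?thesis .
qed

definition tokens_sent :: "('v::finite \<Rightarrow> nat \<Rightarrow> 'v) \<Rightarrow> ('v \<Rightarrow> nat) \<Rightarrow> nat \<Rightarrow> 'v \<Rightarrow> nat" where
  "tokens_sent \<sigma> \<chi>0 t = snd (router_state \<sigma> \<chi>0 t)"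

lemma chi_0: "chi \<sigma> \<chi>0 0 = \<chi>0"
  by (simp add: chi_def)

lemma tokens_sent_0: "tokens_sent \<sigma> \<chi>0 0 v = 0"
  by (simp add: tokens_sent_def)

lemma tokens_sent_Suc: "tokens_sent \<sigma> \<chi>0 (Suc t) v = tokens_sent \<sigma> \<chi>0 t v + chi \<sigma> \<chi>0 t v"
  by (simp add: chi_def tokens_sent_def Let_def split_beta)

lemma chi_Suc:
  "chi \<sigma> \<chi>0 (Suc t) u
     = (\<Sum>v\<in>UNIV. I_cnt \<sigma> v u (tokens_sent \<sigma> \<chi>0 t v) (tokens_sent \<sigma> \<chi>0 (Suc t) v))"
  by (simp add: chi_def tokens_sent_def Let_def split_beta)

lemma mu_0: "mu P \<chi>0 0 w = real (\<chi>0 w)"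
  by (simp add: mu_def)

lemma chi_Suc_eq_evolve_plus_discrepancy:
  "real (chi \<sigma> \<chi>0 (Suc t) u)
     = (\<Sum>v\<in>UNIV. real (chi \<sigma> \<chi>0 t v) * P v u)
       + (\<Sum>v\<in>UNIV. router_discrepancy P \<sigma> v u (tokens_sent \<sigma> \<chi>0 (Suc t) v)
                    - router_discrepancy P \<sigma> v u (tokens_sent \<sigma> \<chi>0 t v))"
proof -
  let ?C = "tokens_sent \<sigma> \<chi>0"
  have "real (I_cnt \<sigma> v u (?C t v) (?C (Suc t) v))
      = real (chi \<sigma> \<chi>0 t v) * P v u
        + (router_discrepancy P \<sigma> v u (?C (Suc t) v) - router_discrepancy P \<sigma> v u (?C t v))" for v
  proof -
    have "real (I_cnt \<sigma> v u 0 (?C t v)) + real (I_cnt \<sigma> v u (?C t v) (?C (Suc t) v))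
        = real (I_cnt \<sigma> v u 0 (?C (Suc t) v))"
      using I_cnt_concat[of "?C t v" "?C (Suc t) v" \<sigma> v u] tokens_sent_Suc[of \<sigma> \<chi>0 t v]
      by (metis le_add1 of_nat_add)
    then show ?thesis by (simp add: router_discrepancy_def tokens_sent_Suc algebra_simps)
  qed
  then show ?thesis by (simp add: chi_Suc sum.distrib)
qed

context stochastic_matrix
begin

lemma srt_discrepancy_sum_by_parts_le:
  assumes "srt_router P \<sigma>" and "z 0 = 0"
  shows "\<bar>\<Sum>t<Suc n. (router_discrepancy P \<sigma> v u (z (Suc t)) - router_discrepancy P \<sigma> v u (z t))
              * (matpow P (n - t) u w - c)\<bar>
    \<le> (if P v u > 0 then \<bar>matpow P 0 u w - c\<bar> + (\<Sum>s<n. \<bar>matpow P (Suc s) u w - matpow P s u w\<bar>) else 0)"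
proof (cases "P v u > 0")
  case True
  define g where "g t = matpow P (n - t) u w - c" for t
  have "\<bar>\<Sum>t<Suc n. (router_discrepancy P \<sigma> v u (z (Suc t)) - router_discrepancy P \<sigma> v u (z t)) * g t\<bar>
      \<le> \<bar>g n\<bar> + (\<Sum>t<n. \<bar>g t - g (Suc t)\<bar>)"
    by (rule abel_summation_bound)
      (simp add: \<open>z 0 = 0\<close> router_discrepancy_def I_cnt_def, rule srt_discrepancy_bound[OF assms(1)])
  also have "(\<Sum>t<n. \<bar>g t - g (Suc t)\<bar>)
      = (\<Sum>t<n. \<bar>matpow P (Suc (n - Suc t)) u w - matpow P (n - Suc t) u w\<bar>)"
    unfolding g_def by (intro sum.cong) (simp_all add: Suc_diff_Suc)
  also have "\<dots> = (\<Sum>s<n. \<bar>matpow P (Suc s) u w - matpow P s u w\<bar>)"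
    by (rule sum.nat_diff_reindex)
  finally show ?thesis using True by (simp add: g_def)
qed (simp add: srt_discrepancy_non_neighbour[OF assms(1)])

end

context reversible_ergodic_chain
begin

lemma sum_abs_le_by_reversal:
  assumes "\<And>u. \<pi> u * a u = \<pi> w * b u"
  shows "(\<Sum>u\<in>UNIV. \<bar>a u\<bar>) \<le> \<pi> w / pi_min \<pi> * (\<Sum>u\<in>UNIV. \<bar>b u\<bar>)"
proof -
  have "\<bar>a u\<bar> \<le> \<pi> w / pi_min \<pi> * \<bar>b u\<bar>" for u
  proof -
    have "a u = \<pi> w / \<pi> u * b u" using assms[of u] pi_pos[of u] by (simp add: field_simps)
    then have "\<bar>a u\<bar> = \<pi> w / \<pi> u * \<bar>b u\<bar>" using pi_pos[of u] pi_pos[of w] by (simp add: abs_mult)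
    also have "\<dots> \<le> \<pi> w / pi_min \<pi> * \<bar>b u\<bar>"
      using pi_min_pos pi_min_le[of u] pi_pos[of w]
      by (intro mult_right_mono divide_left_mono) simp_all
    finally show ?thesis .
  qed
  then have "(\<Sum>u\<in>UNIV. \<bar>a u\<bar>) \<le> (\<Sum>u\<in>UNIV. \<pi> w / pi_min \<pi> * \<bar>b u\<bar>)" by (rule sum_mono)
  then show ?thesis by (simp only: sum_distrib_left)
qed

lemma column_sum_matpow_0_pi:
  "(\<Sum>u\<in>UNIV. \<bar>matpow P 0 u w - \<pi> w\<bar>) \<le> \<pi> w / pi_min \<pi> * (2 * tv_diameter P 0)"
proof -
  have "(\<Sum>u\<in>UNIV. \<bar>matpow P 0 u w - \<pi> w\<bar>) \<le> \<pi> w / pi_min \<pi> * (\<Sum>u\<in>UNIV. \<bar>matpow P 0 w u - \<pi> u\<bar>)"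
    by (rule sum_abs_le_by_reversal) (simp add: algebra_simps)
  also have "\<dots> \<le> \<pi> w / pi_min \<pi> * (2 * tv_diameter P 0)"
    using tv_dist_pi_le_tv_diameter[of 0 w] pi_nonneg[of w] pi_min_pos
    by (intro mult_left_mono) (simp_all add: tv_dist_def)
  finally show ?thesis .
qed

lemma column_sum_matpow_Suc:
  "(\<Sum>u\<in>UNIV. \<bar>matpow P (Suc s) u w - matpow P s u w\<bar>)
     \<le> \<pi> w / pi_min \<pi> * (2 * tv_diameter P s)"
proof -
  have "(\<Sum>u\<in>UNIV. \<bar>matpow P (Suc s) u w - matpow P s u w\<bar>)
      \<le> \<pi> w / pi_min \<pi> * (\<Sum>u\<in>UNIV. \<bar>matpow P (Suc s) w u - matpow P s w u\<bar>)"
    by (rule sum_abs_le_by_reversal) (simp only: right_diff_distrib matpow_reversible)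
  also have "\<dots> \<le> \<pi> w / pi_min \<pi> * (2 * tv_diameter P s)"
    using tv_dist_matpow_Suc[of s w] pi_nonneg[of w] pi_min_pos
    by (intro mult_left_mono) (simp_all add: tv_dist_def)
  finally show ?thesis .
qed

lemma in_degree_le_max_degree: "card {v. P v u > 0} \<le> max_degree P"
proof -
  have "{v. P v u > 0} = nbhd P u" unfolding nbhd_def using P_pos_sym by auto
  then show ?thesis unfolding max_degree_def by simp
qed

lemma chi_minus_mu_eq:
  fixes \<sigma> :: "'v \<Rightarrow> nat \<Rightarrow> 'v" and \<chi>0 :: "'v \<Rightarrow> nat"
  defines "\<psi> v u t \<equiv> router_discrepancy P \<sigma> v u (tokens_sent \<sigma> \<chi>0 t v)"
  shows "real (chi \<sigma> \<chi>0 n w) - mu P \<chi>0 n w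
    = (\<Sum>v\<in>UNIV. \<Sum>u\<in>UNIV. \<Sum>t<n. (\<psi> v u (Suc t) - \<psi> v u t) * (matpow P (n - Suc t) u w - \<pi> w))"
proof -
  define e where "e t u = (\<Sum>v\<in>UNIV. \<psi> v u (Suc t) - \<psi> v u t)" for t u
  have mass_0: "(\<Sum>u\<in>UNIV. e t u) = 0" for t
    unfolding e_def \<psi>_def by (subst sum.swap) (simp add: sum_subtractf sum_router_discrepancy)
  have "real (chi \<sigma> \<chi>0 n w) - mu P \<chi>0 n w = (\<Sum>t<n. \<Sum>u\<in>UNIV. e t u * matpow P (n - Suc t) u w)"
    unfolding mu_def
    by (rule matpow_perturbed_evolution[where x = "\<lambda>t u. real (chi \<sigma> \<chi>0 t u)", simplified chi_0])
      (simp add: e_def \<psi>_def chi_Suc_eq_evolve_plus_discrepancy)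
  also have "\<dots> = (\<Sum>t<n. \<Sum>u\<in>UNIV. e t u * (matpow P (n - Suc t) u w - \<pi> w))"
    by (simp add: right_diff_distrib sum_subtractf mass_0 flip: sum_distrib_right)
  also have "\<dots> = (\<Sum>t<n. \<Sum>v\<in>UNIV. \<Sum>u\<in>UNIV. (\<psi> v u (Suc t) - \<psi> v u t) * (matpow P (n - Suc t) u w - \<pi> w))"
    unfolding e_def sum_distrib_right by (rule sum.cong[OF refl], rule sum.swap)
  also have "\<dots> = (\<Sum>v\<in>UNIV. \<Sum>t<n. \<Sum>u\<in>UNIV. (\<psi> v u (Suc t) - \<psi> v u t) * (matpow P (n - Suc t) u w - \<pi> w))"
    by (rule sum.swap)
  also have "\<dots> = (\<Sum>v\<in>UNIV. \<Sum>u\<in>UNIV. \<Sum>t<n. (\<psi> v u (Suc t) - \<psi> v u t) * (matpow P (n - Suc t) u w - \<pi> w))"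
    by (rule sum.cong[OF refl], rule sum.swap)
  finally show ?thesis .
qed

lemma srt_chi_mu_le_tv_diameter_sum:
  assumes srt: "srt_router P \<sigma>"
  shows "\<bar>real (chi \<sigma> \<chi>0 (Suc n) w) - mu P \<chi>0 (Suc n) w\<bar>
     \<le> real (max_degree P) * (\<pi> w / pi_min \<pi> * (2 * tv_diameter P 0 + (\<Sum>s<n. 2 * tv_diameter P s)))"
proof -
  define \<psi> where "\<psi> v u t = router_discrepancy P \<sigma> v u (tokens_sent \<sigma> \<chi>0 t v)" for v u t
  define g where "g u t = matpow P (n - t) u w - \<pi> w" for u t
  define h where "h u = \<bar>matpow P 0 u w - \<pi> w\<bar> + (\<Sum>s<n. \<bar>matpow P (Suc s) u w - matpow P s u w\<bar>)" for u
  have h_nonneg: "h u \<ge> 0" for u unfolding h_def by (simp add: sum_nonneg)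
  have edge: "\<bar>\<Sum>t<Suc n. (\<psi> v u (Suc t) - \<psi> v u t) * g u t\<bar> \<le> (if P v u > 0 then h u else 0)" for v u
    unfolding \<psi>_def g_def h_def by (rule srt_discrepancy_sum_by_parts_le[OF srt]) (simp add: tokens_sent_0)
  have "\<bar>real (chi \<sigma> \<chi>0 (Suc n) w) - mu P \<chi>0 (Suc n) w\<bar>
      = \<bar>\<Sum>v\<in>UNIV. \<Sum>u\<in>UNIV. \<Sum>t<Suc n. (\<psi> v u (Suc t) - \<psi> v u t) * g u t\<bar>"
    by (simp add: chi_minus_mu_eq \<psi>_def g_def)
  also have "\<dots> \<le> (\<Sum>v\<in>UNIV. \<Sum>u\<in>UNIV. if P v u > 0 then h u else 0)"
    by (rule order_trans[OF sum_abs sum_mono], rule order_trans[OF sum_abs sum_mono], rule edge)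
  also have "\<dots> = (\<Sum>u\<in>UNIV. real (card {v. P v u > 0}) * h u)"
    by (subst sum.swap) (simp add: sum.If_cases)
  also have "\<dots> \<le> (\<Sum>u\<in>UNIV. real (max_degree P) * h u)"
    by (intro sum_mono mult_right_mono h_nonneg) (simp add: in_degree_le_max_degree)
  also have "\<dots> = real (max_degree P) * (\<Sum>u\<in>UNIV. h u)"
    by (simp add: sum_distrib_left)
  also have "\<dots> \<le> real (max_degree P) * (\<pi> w / pi_min \<pi> * (2 * tv_diameter P 0 + (\<Sum>s<n. 2 * tv_diameter P s)))"
  proof (rule mult_left_mono)
    have "(\<Sum>u\<in>UNIV. h u) = (\<Sum>u\<in>UNIV. \<bar>matpow P 0 u w - \<pi> w\<bar>)
        + (\<Sum>s<n. \<Sum>u\<in>UNIV. \<bar>matpow P (Suc s) u w - matpow P s u w\<bar>)"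
      unfolding h_def by (simp add: sum.distrib sum.swap[of _ UNIV "{..<n}"])
    also have "\<dots> \<le> \<pi> w / pi_min \<pi> * (2 * tv_diameter P 0) + (\<Sum>s<n. \<pi> w / pi_min \<pi> * (2 * tv_diameter P s))"
      by (intro add_mono sum_mono column_sum_matpow_0_pi column_sum_matpow_Suc)
    finally show "(\<Sum>u\<in>UNIV. h u) \<le> \<pi> w / pi_min \<pi> * (2 * tv_diameter P 0 + (\<Sum>s<n. 2 * tv_diameter P s))"
      by (simp add: distrib_left sum_distrib_left)
  qed simp
  finally show ?thesis .
qed

end

theorem theorem3p2:
  fixes P :: "'v::finite \<Rightarrow> 'v \<Rightarrow> real"
    and \<pi> :: "'v \<Rightarrow> real"
    and \<sigma> :: "'v \<Rightarrow> nat \<Rightarrow> 'v"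
    and \<chi>0 :: "'v \<Rightarrow> nat"
  assumes "ergodic_chain P"
    and "reversible_chain P \<pi>"
    and "stationary_dist P \<pi>"
    and "srt_router P \<sigma>"
  shows "\<forall>w T. \<bar>real (chi \<sigma> \<chi>0 T w) - mu P \<chi>0 T w\<bar>
           \<le> 6 * \<pi> w / pi_min \<pi> * real (mixing_rate P \<pi>) * real (max_degree P)"
proof (intro allI)
  fix w T
  interpret reversible_ergodic_chain P \<pi>
    using assms(1-3) unfolding ergodic_chain_def by unfold_locales auto
  let ?c = "real (max_degree P) * (\<pi> w / pi_min \<pi>)"
  have "?c \<ge> 0" using pi_nonneg[of w] pi_min_pos by simp
  show "\<bar>real (chi \<sigma> \<chi>0 T w) - mu P \<chi>0 T w\<bar> \<le> 6 * \<pi> w / pi_min \<pi> * real (mixing_rate P \<pi>) * real (max_degree P)"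
  proof (cases T)
    case 0
    then show ?thesis using pi_nonneg[of w] pi_min_pos by (simp add: chi_0 mu_0)
  next
    case (Suc n)
    let ?F = "2 * tv_diameter P 0 + (\<Sum>s<n. 2 * tv_diameter P s)"
    have "\<bar>real (chi \<sigma> \<chi>0 T w) - mu P \<chi>0 T w\<bar> \<le> ?c * ?F"
      using srt_chi_mu_le_tv_diameter_sum[OF assms(4), of \<chi>0 n w] Suc by (simp only: mult.assoc)
    also have "\<dots> \<le> ?c * (6 * real (mixing_rate P \<pi>))"
      using tv_diameter_0_le_mixing_rate sum_tv_diameter_le[of n] \<open>?c \<ge> 0\<close>
      by (intro mult_left_mono) (simp_all flip: sum_distrib_left)
    finally show ?thesis by (simp add: algebra_simps)
  qed
qed

end
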